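(* Assume linear utilities and that $X \triangleq \phi(X_1)-\phi(X_2) \sim \mathcal{N}(0,\Sigma)$ with $\Sigma$ positive definite, independent of the user parameter $\beta$, where $\mathbb{E}\|\beta\|<\infty$. Let $\hat\beta^{\mathrm{RLHF}}\in\mathbb{R}^d$ be any solution of the population first-order (moment) equation of the RLHF cross-entropy objective, $$\mathbb{E}_X\big[\sigma(X^\top\hat\beta^{\mathrm{RLHF}})X\big]=\mathbb{E}_X\Big[\mathbb{E}_\beta\big[\sigma(X^\top\beta)\big]X\Big].$$ Then $$\hat\beta^{\mathrm{RLHF}} = c\,\mathbb{E}_\beta\Big[\mathbb{E}_X\big[\sigma'(X^\top\beta)\big]\,\beta\Big],\qquad c=\frac{1}{\mathbb{E}_X[\sigma'(X^\top\hat\beta^{\mathrm{RLHF}})]}>0,$$ i.e. $\hat\beta^{\mathrm{RLHF}}$ is a positive multiple of the weighted mean $\mathbb{E}_\beta[w(\beta)\beta]$ with weights $w(\beta)=\mathbb{E}_X[\sigma'(X^\top\beta)]$. *)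

theory Defs
  imports "HOL-Probability.Probability"
begin

definition sigmoid :: "real \<Rightarrow> real" where
  "sigmoid t = 1 / (1 + exp (- t))"

definition pos_def_mat :: "real ^'n ^'n \<Rightarrow> bool" where
  "pos_def_mat S \<longleftrightarrow> transpose S = S \<and> (\<forall>x. x \<noteq> 0 \<longrightarrow> x \<bullet> (S *v x) > 0)"

definition gauss_pdf :: "real ^'n ^'n \<Rightarrow> real ^'n \<Rightarrow> real" where
  "gauss_pdf S x = exp (- (x \<bullet> (matrix_inv S *v x)) / 2)
                    / sqrt ((2 * pi) ^ CARD('n) * det S)"

definition gaussian_vec :: "real ^'n ^'n \<Rightarrow> (real ^'n) measure" where
  "gaussian_vec S = density lborel (\<lambda>x. ennreal (gauss_pdf S x))"

end

theory Submission
  imports Defs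
begin

(* For X ~ N(0, S) and a bounded g with bounded continuous derivative g', Stein's identity
     E[g (X \<bullet> \<beta>) X] = E[g' (X \<bullet> \<beta>)] S \<beta>
   holds: integrate by parts along the direction S v, in which the Gaussian density has
   logarithmic derivative -(x \<bullet> v). With g = sigmoid it turns the left-hand side of the moment
   equation into w(b) S b, where w(\<beta>) = E[sigmoid' (X \<bullet> \<beta>)] > 0, and, after exchanging the
   expectations over X and \<beta> (Fubini), the right-hand side into S E[w(\<beta>) \<beta>]. Since S is
   invertible, b = E[w(\<beta>) \<beta>] / w(b). *)

section \<open>The logistic sigmoid\<close>

lemma one_plus_exp_pos: "0 < 1 + exp (t::real)"
  by (simp add: add_pos_pos)

lemma sigmoid_pos: "0 < sigmoid t"
  unfolding sigmoid_def using one_plus_exp_pos[of "-t"] by simp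

lemma sigmoid_less_1: "sigmoid t < 1"
  unfolding sigmoid_def using one_plus_exp_pos[of "-t"] by (simp add: divide_less_eq)

lemma has_real_derivative_sigmoid:
  "(sigmoid has_real_derivative exp (- t) / (1 + exp (- t))\<^sup>2) (at t)"
  unfolding sigmoid_def[abs_def]
  using one_plus_exp_pos[of "-t"]
  by (auto intro!: derivative_eq_intros simp: power2_eq_square)

lemma deriv_sigmoid: "deriv sigmoid t = exp (- t) / (1 + exp (- t))\<^sup>2"
  by (rule DERIV_imp_deriv[OF has_real_derivative_sigmoid])

lemma deriv_sigmoid_pos: "0 < deriv sigmoid t"
  unfolding deriv_sigmoid using one_plus_exp_pos[of "-t"] by simp

lemma deriv_sigmoid_le_1: "deriv sigmoid t \<le> 1"
proof -
  have "exp (- t) \<le> (1 + exp (- t))\<^sup>2" by (simp add: power2_eq_square algebra_simps)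
  then show ?thesis
    unfolding deriv_sigmoid using one_plus_exp_pos[of "-t"] by (simp add: divide_le_eq_1)
qed

lemma continuous_on_deriv_sigmoid: "continuous_on UNIV (deriv sigmoid)"
  unfolding deriv_sigmoid[abs_def] using one_plus_exp_pos
  by (intro continuous_intros) (metis less_irrefl power_not_zero)

lemma borel_measurable_sigmoid [measurable]: "sigmoid \<in> borel_measurable borel"
  unfolding sigmoid_def[abs_def] by measurable

lemma borel_measurable_deriv_sigmoid [measurable]: "deriv sigmoid \<in> borel_measurable borel"
  by (rule borel_measurable_continuous_onI[OF continuous_on_deriv_sigmoid])

section \<open>Positive definite matrices\<close>

lemma pos_def_mat_symmetric: "pos_def_mat S \<Longrightarrow> transpose S = S"
  by (simp add: pos_def_mat_def)

lemma pos_def_mat_kernel: "pos_def_mat S \<Longrightarrow> S *v x = 0 \<Longrightarrow> x = 0"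
  unfolding pos_def_mat_def by force

lemma pos_def_mat_invertible: "pos_def_mat S \<Longrightarrow> invertible S"
  using pos_def_mat_kernel matrix_left_invertible_ker invertible_left_inverse by blast

lemma pos_def_mat_matrix_inv:
  fixes S :: "real^'n^'n"
  assumes "pos_def_mat S"
  shows "S ** matrix_inv S = mat 1" "matrix_inv S ** S = mat 1"
proof -
  have "\<exists>A. S ** A = mat 1 \<and> A ** S = mat 1"
    using pos_def_mat_invertible[OF assms] unfolding invertible_def .
  then have "S ** matrix_inv S = mat 1 \<and> matrix_inv S ** S = mat 1"
    unfolding matrix_inv_def by (rule someI_ex)
  then show "S ** matrix_inv S = mat 1" "matrix_inv S ** S = mat 1" by auto
qed

lemma pos_def_mat_inverse:
  fixes S :: "real^'n^'n"
  assumes S: "pos_def_mat S"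
  shows "pos_def_mat (matrix_inv S)"
  unfolding pos_def_mat_def
proof (intro conjI allI impI)
  let ?P = "matrix_inv S"
  have "S ** transpose ?P = mat 1"
    using arg_cong[OF pos_def_mat_matrix_inv(2)[OF S], of transpose]
    by (simp add: matrix_transpose_mul pos_def_mat_symmetric[OF S])
  then have "?P ** (S ** transpose ?P) = ?P" by simp
  then show "transpose ?P = ?P" by (simp add: matrix_mul_assoc pos_def_mat_matrix_inv(2)[OF S])
  fix x :: "real^'n" assume "x \<noteq> 0"
  define y where "y = ?P *v x"
  have x: "x = S *v y"
    by (simp add: y_def matrix_vector_mul_assoc pos_def_mat_matrix_inv(1)[OF S])
  with \<open>x \<noteq> 0\<close> have "y \<noteq> 0" by auto
  then have "0 < y \<bullet> (S *v y)" using S by (simp add: pos_def_mat_def)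
  also have "y \<bullet> (S *v y) = x \<bullet> (?P *v x)"
    unfolding x[symmetric] by (simp add: y_def inner_commute)
  finally show "0 < x \<bullet> (?P *v x)" .
qed

lemma quadratic_form_coercive:
  fixes P :: "real^'n^'n"
  assumes "\<And>x. x \<noteq> 0 \<Longrightarrow> x \<bullet> (P *v x) > 0"
  obtains l where "l > 0" "\<And>x. x \<bullet> (P *v x) \<ge> l * (norm x)\<^sup>2"
proof -
  have cont: "continuous_on (sphere 0 1) (\<lambda>x::real^'n. x \<bullet> (P *v x))"
    by (intro continuous_intros linear_continuous_on matrix_vector_mul_linear)
  have ne: "sphere (0::real^'n) 1 \<noteq> {}" by simp
  obtain u where u: "u \<in> sphere 0 1" "\<And>y. y \<in> sphere 0 1 \<Longrightarrow> u \<bullet> (P *v u) \<le> y \<bullet> (P *v y)"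
    using continuous_attains_inf[OF compact_sphere ne cont] by blast
  have "u \<noteq> 0" using u(1) by auto
  then have lpos: "u \<bullet> (P *v u) > 0" by (rule assms)
  show ?thesis
  proof (rule that[OF lpos])
    fix x :: "real^'n"
    show "x \<bullet> (P *v x) \<ge> (u \<bullet> (P *v u)) * (norm x)\<^sup>2"
    proof (cases "x = 0")
      case True then show ?thesis by simp
    next
      case False
      define z where "z = (1 / norm x) *\<^sub>R x"
      have "z \<in> sphere 0 1" unfolding z_def using False by simp
      then have "u \<bullet> (P *v u) \<le> z \<bullet> (P *v z)" by (rule u(2))
      also have "z \<bullet> (P *v z) = (x \<bullet> (P *v x)) / (norm x)\<^sup>2"
        unfolding z_def by (simp add: matrix_vector_mult_scaleR power2_eq_square)
      finally show ?thesis using False by (simp add: field_simps)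
    qed
  qed
qed

lemma pos_def_mat_det_pos:
  assumes "pos_def_mat (S::real^'n^'n)"
  shows "det S > 0"
proof -
  txt \<open>The segment from the identity to S consists of positive definite, hence invertible,
    matrices, so by the intermediate value theorem det keeps the sign of det (mat 1) = 1.\<close>
  define M where "M = (\<lambda>t::real. t *\<^sub>R S + (1 - t) *\<^sub>R mat 1)"
  have nz: "det (M t) \<noteq> 0" if "0 \<le> t" "t \<le> 1" for t
  proof -
    have "x = 0" if "M t *v x = 0" for x
    proof (rule ccontr)
      assume x: "x \<noteq> 0"
      have "x \<bullet> (M t *v x) = t * (x \<bullet> (S *v x)) + (1 - t) * (x \<bullet> x)"
        unfolding M_def by (simp add: matrix_vector_mult_add_rdistrib scaleR_matrix_vector_assoc[symmetric] inner_add_right)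
      moreover have "x \<bullet> (S *v x) > 0" using assms x unfolding pos_def_mat_def by auto
      moreover have "x \<bullet> x > 0" using x by simp
      ultimately have "x \<bullet> (M t *v x) > 0" using \<open>0 \<le> t\<close> \<open>t \<le> 1\<close>
        by (smt (verit, best) mult_nonneg_nonneg mult_pos_pos)
      then show False using that by simp
    qed
    then have "invertible (M t)" using matrix_left_invertible_ker invertible_left_inverse by blast
    then show ?thesis using invertible_det_nz by blast
  qed
  have cont: "isCont (\<lambda>t. det (M t)) t" for t
    unfolding M_def det_def by (simp add: mat_def) (intro continuous_intros)
  have "det (M 0) = 1" by (simp add: M_def)
  show ?thesis
  proof (rule ccontr)
    assume "\<not> det S > 0"
    then have "det (M 1) \<le> 0" by (simp add: M_def)
    then obtain t where "0 \<le> t" "t \<le> 1" "det (M t) = 0"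
      using IVT2[of "\<lambda>t. det (M t)" 1 0 0] \<open>det (M 0) = 1\<close> cont by auto
    then show False using nz by blast
  qed
qed

section \<open>Gaussian integrals\<close>

lemma integrable_lborel_prod_Basis:
  fixes f :: "'a::euclidean_space \<Rightarrow> real \<Rightarrow> real"
  assumes int: "\<And>b. b \<in> Basis \<Longrightarrow> integrable lborel (f b)"
    and nn: "\<And>b t. b \<in> Basis \<Longrightarrow> 0 \<le> f b t"
  shows "integrable lborel (\<lambda>x::'a. \<Prod>b\<in>Basis. f b (x \<bullet> b))"
proof -
  have [measurable]: "f b \<in> borel_measurable borel" if "b \<in> Basis" for b
    using borel_measurable_integrable[OF int[OF that]] by simp
  have meas: "(\<lambda>x::'a. \<Prod>b\<in>Basis. f b (x \<bullet> b)) \<in> borel_measurable lborel"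
    by measurable
  have fin: "(\<integral>\<^sup>+t. ennreal (f b t) \<partial>lborel) < \<infinity>" if "b \<in> Basis" for b
    using int[OF that] nn[OF that] unfolding integrable_iff_bounded by simp
  have "(\<integral>\<^sup>+x. ennreal (norm (\<Prod>b\<in>Basis. f b (x \<bullet> b))) \<partial>lborel)
      = (\<integral>\<^sup>+x. (\<Prod>b\<in>Basis. ennreal (f b (x \<bullet> b))) \<partial>lborel)"
    using nn by (intro nn_integral_cong) (simp add: prod_ennreal prod_nonneg abs_prod)
  also have "\<dots> = (\<Prod>b\<in>Basis. (\<integral>\<^sup>+t. ennreal (f b t) \<partial>lborel))"
    by (rule nn_integral_lborel_prod) auto
  also have "\<dots> < \<infinity>"
    using fin by (simp add: less_top[symmetric] ennreal_prod_eq_top)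
  finally show ?thesis using meas unfolding integrable_iff_bounded by simp
qed

lemma integrable_abs_power_exp_neg_square:
  assumes a: "a > 0"
  shows "integrable lborel (\<lambda>t::real. \<bar>t\<bar>^k * exp (- a * t\<^sup>2))"
proof -
  define c where "c = sqrt (2 * a)"
  have c: "c > 0" using a by (simp add: c_def)
  have c2: "c\<^sup>2 = 2 * a" using a by (simp add: c_def)
  have "integrable lborel (\<lambda>t. std_normal_density (0 + c * t) * \<bar>0 + c * t\<bar>^k)"
    using lborel_integrable_real_affine[OF integrable_std_normal_moment_abs[of k], of c 0] c by simp
  then have "integrable lborel (\<lambda>t. (sqrt (2 * pi) / c ^ k) * (std_normal_density (0 + c * t) * \<bar>0 + c * t\<bar>^k))"
    by simp
  also have "(\<lambda>t. (sqrt (2 * pi) / c ^ k) * (std_normal_density (0 + c * t) * \<bar>0 + c * t\<bar>^k))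
      = (\<lambda>t::real. \<bar>t\<bar>^k * exp (- a * t\<^sup>2))"
  proof
    fix t :: real
    have "exp (- (c * t)\<^sup>2 / 2) = exp (- a * t\<^sup>2)"
      by (simp add: power_mult_distrib c2)
    then show "(sqrt (2 * pi) / c ^ k) * (std_normal_density (0 + c * t) * \<bar>0 + c * t\<bar>^k) = \<bar>t\<bar>^k * exp (- a * t\<^sup>2)"
      using c by (simp add: std_normal_density_def abs_mult power_mult_distrib field_simps)
  qed
  finally show ?thesis .
qed

lemma integrable_one_plus_norm_exp_neg_square:
  assumes a: "a > 0"
  shows "integrable lborel (\<lambda>x::'a::euclidean_space. (1 + norm x) * exp (- a * (norm x)\<^sup>2))"
proof -
  define g :: "'a \<Rightarrow> 'a \<Rightarrow> real \<Rightarrow> real" where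
    "g j b t = (if b = j then \<bar>t\<bar> else 1) * exp (- a * t\<^sup>2)" for j b t
  define D where
    "D x = (\<Prod>b\<in>Basis. exp (- a * (x \<bullet> b)\<^sup>2)) + (\<Sum>j\<in>Basis. \<Prod>b\<in>Basis. g j b (x \<bullet> b))" for x
  have D_int: "integrable lborel D"
    unfolding D_def
  proof (intro Bochner_Integration.integrable_add Bochner_Integration.integrable_sum)
    show "integrable lborel (\<lambda>x::'a. \<Prod>b\<in>Basis. exp (- a * (x \<bullet> b)\<^sup>2))"
      using integrable_lborel_prod_Basis[of "\<lambda>b t. exp (- a * t\<^sup>2)"]
        integrable_abs_power_exp_neg_square[OF a, of 0] by simp
    fix j :: 'a
    show "integrable lborel (\<lambda>x::'a. \<Prod>b\<in>Basis. g j b (x \<bullet> b))"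
    proof (rule integrable_lborel_prod_Basis)
      show "integrable lborel (g j b)" for b
        unfolding g_def using integrable_abs_power_exp_neg_square[OF a, of 0]
          integrable_abs_power_exp_neg_square[OF a, of 1]
        by (cases "b = j") simp_all
      show "0 \<le> g j b t" for b t unfolding g_def by simp
    qed
  qed
  have exp_norm: "exp (- a * (norm x)\<^sup>2) = (\<Prod>b\<in>Basis. exp (- a * (x \<bullet> b)\<^sup>2))" for x :: 'a
  proof -
    have "(norm x)\<^sup>2 = (\<Sum>b\<in>Basis. (x \<bullet> b)\<^sup>2)"
      by (subst power2_norm_eq_inner, subst euclidean_inner) (simp add: power2_eq_square)
    then show ?thesis by (simp add: sum_distrib_left exp_sum)
  qed
  have prod_g: "(\<Prod>b\<in>Basis. g j b (x \<bullet> b)) = \<bar>x \<bullet> j\<bar> * exp (- a * (norm x)\<^sup>2)"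
    if "j \<in> Basis" for j x
    unfolding g_def prod.distrib exp_norm using that by (simp add: prod.delta)
  have D_eq: "D x = (1 + (\<Sum>j\<in>Basis. \<bar>x \<bullet> j\<bar>)) * exp (- a * (norm x)\<^sup>2)" for x
    unfolding D_def exp_norm[symmetric] using prod_g by (simp add: sum_distrib_right distrib_right)
  have "(1 + norm x) * exp (- a * (norm x)\<^sup>2) \<le> D x" for x
    unfolding D_eq using norm_le_l1[of x] by (intro mult_right_mono) auto
  then show ?thesis
    by (intro Bochner_Integration.integrable_bound[OF D_int])
      (auto intro!: AE_I2 intro: order_trans[OF _ abs_ge_self])
qed

lemma gauss_pdf_eq: "gauss_pdf S x = gauss_pdf S 0 * exp (- (x \<bullet> (matrix_inv S *v x)) / 2)"
  by (simp add: gauss_pdf_def)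

lemma gauss_pdf_pos:
  assumes "pos_def_mat S" shows "0 < gauss_pdf S x"
  using pos_def_mat_det_pos[OF assms] unfolding gauss_pdf_def by simp

lemma continuous_on_gauss_pdf: "continuous_on UNIV (gauss_pdf (S::real^'n^'n))"
  unfolding gauss_pdf_def[abs_def] divide_inverse
  by (intro continuous_on_mult_right continuous_intros linear_continuous_on matrix_vector_mul_linear)

lemma borel_measurable_gauss_pdf[measurable]: "gauss_pdf (S::real^'n^'n) \<in> borel_measurable borel"
  by (rule borel_measurable_continuous_onI[OF continuous_on_gauss_pdf])

lemma gauss_pdf_le_exp_neg_norm_square:
  fixes S :: "real^'n^'n"
  assumes "pos_def_mat S"
  obtains l where "0 < l" "\<And>x. gauss_pdf S x \<le> gauss_pdf S 0 * exp (- l * (norm x)\<^sup>2)"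
proof -
  obtain l where l: "0 < l" "\<And>x. l * (norm x)\<^sup>2 \<le> x \<bullet> (matrix_inv S *v x)"
    using quadratic_form_coercive pos_def_mat_inverse[OF assms] unfolding pos_def_mat_def by metis
  show thesis
  proof (rule that)
    show "0 < l / 2" using l(1) by simp
    fix x :: "real^'n"
    have "exp (- (x \<bullet> (matrix_inv S *v x)) / 2) \<le> exp (- (l / 2) * (norm x)\<^sup>2)"
      using l(2)[of x] by simp
    then show "gauss_pdf S x \<le> gauss_pdf S 0 * exp (- (l / 2) * (norm x)\<^sup>2)"
      using pos_def_mat_det_pos[OF assms] by (simp add: gauss_pdf_def divide_right_mono)
  qed
qed

lemma integrable_one_plus_norm_gauss_pdf:
  assumes "pos_def_mat (S::real^'n^'n)"
  shows "integrable lborel (\<lambda>x. (1 + norm x) * gauss_pdf S x)"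
proof -
  obtain l where l: "0 < l" "\<And>x. gauss_pdf S x \<le> gauss_pdf S 0 * exp (- l * (norm x)\<^sup>2)"
    using gauss_pdf_le_exp_neg_norm_square[OF assms] by blast
  have majorant: "integrable lborel (\<lambda>x::real^'n. gauss_pdf S 0 * ((1 + norm x) * exp (- l * (norm x)\<^sup>2)))"
    using integrable_one_plus_norm_exp_neg_square[OF l(1), where 'a="real^'n"] by simp
  have bound: "norm ((1 + norm x) * gauss_pdf S x)
      \<le> norm (gauss_pdf S 0 * ((1 + norm x) * exp (- l * (norm x)\<^sup>2)))" for x
  proof -
    have "(1 + norm x) * gauss_pdf S x \<le> (1 + norm x) * (gauss_pdf S 0 * exp (- l * (norm x)\<^sup>2))"
      using l(2) by (simp add: mult_left_mono)
    then show ?thesis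
      using gauss_pdf_pos[OF assms, of x] gauss_pdf_pos[OF assms, of 0] by (simp add: algebra_simps)
  qed
  show ?thesis
    by (rule Bochner_Integration.integrable_bound[OF majorant], simp, rule AE_I2, rule bound)
qed

lemma integrable_gauss_pdf_linear_growth:
  fixes f :: "real^'n \<Rightarrow> 'b::{banach, second_countable_topology}"
  assumes S: "pos_def_mat S" and [measurable]: "f \<in> borel_measurable borel"
    and growth: "\<And>x. norm (f x) \<le> C * (1 + norm x)"
  shows "integrable lborel (\<lambda>x. gauss_pdf S x *\<^sub>R f x)"
proof -
  have majorant: "integrable lborel (\<lambda>x. C * ((1 + norm x) * gauss_pdf S x))"
    using integrable_one_plus_norm_gauss_pdf[OF S] by simp
  have bound: "norm (gauss_pdf S x *\<^sub>R f x) \<le> norm (C * ((1 + norm x) * gauss_pdf S x))" for x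
  proof -
    have "norm (gauss_pdf S x *\<^sub>R f x) \<le> gauss_pdf S x * (C * (1 + norm x))"
      using growth[of x] gauss_pdf_pos[OF S, of x] by (simp add: mult_left_mono)
    then show ?thesis by (simp add: algebra_simps)
  qed
  show ?thesis
    by (rule Bochner_Integration.integrable_bound[OF majorant], simp, rule AE_I2, rule bound)
qed

lemma integrable_gauss_pdf_bounded:
  fixes f :: "real^'n \<Rightarrow> real"
  assumes S: "pos_def_mat S" and "f \<in> borel_measurable borel" and f_bdd: "\<And>x. \<bar>f x\<bar> \<le> B"
  shows "integrable lborel (\<lambda>x. gauss_pdf S x * f x)"
proof -
  have "\<bar>f x\<bar> \<le> B * (1 + norm x)" for x
    using f_bdd[of x] order_trans[OF abs_ge_zero f_bdd] by (simp add: algebra_simps add_increasing2)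
  then show ?thesis
    using integrable_gauss_pdf_linear_growth[OF S, of f B] assms by simp
qed

lemma sets_gaussian_vec [measurable_cong, simp]: "sets (gaussian_vec S) = sets borel"
  by (simp add: gaussian_vec_def)

lemma integral_gaussian_vec:
  fixes f :: "real^'n \<Rightarrow> 'b::{banach, second_countable_topology}"
  assumes "pos_def_mat S" "f \<in> borel_measurable borel"
  shows "integral\<^sup>L (gaussian_vec S) f = (\<integral>x. gauss_pdf S x *\<^sub>R f x \<partial>lborel)"
  unfolding gaussian_vec_def using assms
  by (intro integral_density) (auto simp: gauss_pdf_pos less_imp_le)

lemma integrable_gaussian_vec_iff:
  fixes f :: "real^'n \<Rightarrow> 'b::{banach, second_countable_topology}"
  assumes "pos_def_mat S" "f \<in> borel_measurable borel"
  shows "integrable (gaussian_vec S) f \<longleftrightarrow> integrable lborel (\<lambda>x. gauss_pdf S x *\<^sub>R f x)"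
  unfolding gaussian_vec_def using assms
  by (intro integrable_density) (auto simp: gauss_pdf_pos less_imp_le)

lemma integrable_gaussian_vec_linear_growth:
  fixes f :: "real^'n \<Rightarrow> 'b::{banach, second_countable_topology}"
  assumes "pos_def_mat S" "f \<in> borel_measurable borel" "\<And>x. norm (f x) \<le> C * (1 + norm x)"
  shows "integrable (gaussian_vec S) f"
  using assms by (subst integrable_gaussian_vec_iff) (auto intro: integrable_gauss_pdf_linear_growth)

lemma finite_measure_gaussian_vec:
  assumes "pos_def_mat (S::real^'n^'n)"
  shows "finite_measure (gaussian_vec S)"
proof -
  have "integrable (gaussian_vec S) (\<lambda>_. 1::real)"
    using assms by (rule integrable_gaussian_vec_linear_growth[where C=1]) auto
  then show ?thesis
    by (intro finite_measureI) (simp add: integrable_iff_bounded)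
qed

lemma integral_gaussian_vec_pos:
  fixes f :: "real^'n \<Rightarrow> real"
  assumes S: "pos_def_mat S" and f: "integrable (gaussian_vec S) f" and pos: "\<And>x. 0 < f x"
  shows "0 < integral\<^sup>L (gaussian_vec S) f"
proof -
  have [measurable]: "f \<in> borel_measurable borel"
    using borel_measurable_integrable[OF f] by simp
  have int: "integrable lborel (\<lambda>x. gauss_pdf S x * f x)"
    using f S by (simp add: integrable_gaussian_vec_iff)
  have pdf_f_pos: "0 < gauss_pdf S x * f x" for x
    using gauss_pdf_pos[OF S] pos by simp
  have "integral\<^sup>L lborel (\<lambda>x. gauss_pdf S x * f x) \<noteq> 0"
  proof
    assume "integral\<^sup>L lborel (\<lambda>x. gauss_pdf S x * f x) = 0"
    then have "AE x in lborel. gauss_pdf S x * f x = 0"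
      using integral_nonneg_eq_0_iff_AE[OF int] pdf_f_pos by (simp add: less_imp_le)
    moreover have "AE x in lborel. gauss_pdf S x * f x = 0 \<longrightarrow> False"
      using pdf_f_pos by (intro AE_I2) (metis less_irrefl)
    ultimately have "AE x in (lborel :: (real^'n) measure). False" by (rule AE_mp)
    then have "ae_filter (lborel :: (real^'n) measure) = bot"
      using trivial_limit_def by blast
    then have "emeasure (lborel :: (real^'n) measure) (space lborel) = 0"
      using ae_filter_eq_bot_iff by blast
    then show False by simp
  qed
  moreover have "0 \<le> integral\<^sup>L lborel (\<lambda>x. gauss_pdf S x * f x)"
    using pdf_f_pos by (simp add: less_imp_le)
  ultimately show ?thesis
    using S by (simp add: integral_gaussian_vec)
qed

section \<open>Integration by parts along a direction\<close>

lemma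
  fixes G :: "'a::euclidean_space \<Rightarrow> real"
  assumes G: "integrable lborel G"
  shows integrable_lborel_translate: "integrable lborel (\<lambda>x. G (x + c))"
    and integral_lborel_translate: "(\<integral>x. G (x + c) \<partial>lborel) = integral\<^sup>L lborel G"
proof -
  have [measurable]: "G \<in> borel_measurable borel" using borel_measurable_integrable[OF G] by simp
  have "integrable (distr lborel borel ((+) c)) G" using G by (simp add: lborel_distr_plus)
  then show "integrable lborel (\<lambda>x. G (x + c))"
    by (subst (asm) integrable_distr_eq) (auto simp: add.commute)
  have "integral\<^sup>L lborel G = integral\<^sup>L (distr lborel borel ((+) c)) G" by (simp add: lborel_distr_plus)
  also have "\<dots> = (\<integral>x. G (c + x) \<partial>lborel)" by (rule integral_distr) auto
  finally show "(\<integral>x. G (x + c) \<partial>lborel) = integral\<^sup>L lborel G" by (simp add: add.commute)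
qed

lemma integral_indicator_line_derivative:
  fixes F G :: "'a::euclidean_space \<Rightarrow> real"
  assumes G_cont: "continuous_on UNIV G"
    and deriv: "\<And>s. ((\<lambda>s. F (x + s *\<^sub>R u)) has_real_derivative G (x + s *\<^sub>R u)) (at s)"
  shows "(\<integral>s. indicator {0..1} s * G (x + s *\<^sub>R u) \<partial>lborel) = F (x + u) - F x"
proof -
  have "(\<integral>s. indicator {0..1} s *\<^sub>R G (x + s *\<^sub>R u) \<partial>lborel) = F (x + 1 *\<^sub>R u) - F (x + 0 *\<^sub>R u)"
  proof (rule integral_FTC_atLeastAtMost)
    show "((\<lambda>s. F (x + s *\<^sub>R u)) has_vector_derivative G (x + s *\<^sub>R u)) (at s within {0..1})" for s
      using deriv[of s]
      by (simp add: has_real_derivative_iff_has_vector_derivative[symmetric] has_field_derivative_at_within)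
    show "continuous_on {0..1} (\<lambda>s. G (x + s *\<^sub>R u))"
      by (rule continuous_on_compose2[OF G_cont]) (auto intro!: continuous_intros)
  qed simp
  then show ?thesis by simp
qed

text \<open>Integrate the fundamental theorem of calculus on the segment from x to x + u over all x
  and swap the integrals: every translate of G has the same integral as G, while the
  integral of F (x + u) - F x vanishes by translation invariance.\<close>
lemma lborel_integral_directional_derivative_eq_0:
  fixes F G :: "'a::euclidean_space \<Rightarrow> real" and u :: 'a
  assumes F_int: "integrable lborel F"
    and G_int: "integrable lborel G"
    and G_cont: "continuous_on UNIV G"
    and deriv: "\<And>x s. ((\<lambda>s. F (x + s *\<^sub>R u)) has_real_derivative G (x + s *\<^sub>R u)) (at s)"
  shows "integral\<^sup>L lborel G = 0"
proof -
  define f where "f s x = indicator {0..1::real} s * G (x + s *\<^sub>R u)" for s x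
  have [measurable]: "G \<in> borel_measurable borel"
    using G_cont by (simp add: borel_measurable_continuous_onI)
  have integral_f: "(\<integral>x. f s x \<partial>lborel) = indicator {0..1} s * integral\<^sup>L lborel G" for s
    unfolding f_def using integral_lborel_translate[OF G_int, of "s *\<^sub>R u"] by simp
  have integral_norm_f:
    "(\<integral>x. norm (f s x) \<partial>lborel) = indicator {0..1} s * (\<integral>x. norm (G x) \<partial>lborel)" for s
    unfolding f_def using integral_lborel_translate[of "\<lambda>x. norm (G x)" "s *\<^sub>R u"] G_int
    by (simp add: abs_mult)
  have f_int: "integrable (lborel \<Otimes>\<^sub>M lborel) (case_prod f)"
  proof (rule lborel_pair.Fubini_integrable)
    show "case_prod f \<in> borel_measurable (lborel \<Otimes>\<^sub>M lborel)"
      unfolding f_def by measurable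
    show "integrable lborel (\<lambda>s. \<integral>x. norm (case_prod f (s, x)) \<partial>lborel)"
      using integral_norm_f by (simp add: integrable_indicator_iff)
    show "AE s in lborel. integrable lborel (\<lambda>x. case_prod f (s, x))"
      unfolding f_def using integrable_lborel_translate[OF G_int] by simp
  qed
  have "integral\<^sup>L lborel G = (\<integral>s. (\<integral>x. f s x \<partial>lborel) \<partial>lborel)"
    by (simp add: integral_f)
  also have "\<dots> = (\<integral>x. (\<integral>s. f s x \<partial>lborel) \<partial>lborel)"
    by (rule lborel_pair.Fubini_integral[OF f_int, symmetric])
  also have "\<dots> = (\<integral>x. F (x + u) - F x \<partial>lborel)"
    unfolding f_def using integral_indicator_line_derivative[OF G_cont deriv] by simp
  also have "\<dots> = 0"
    using integrable_lborel_translate[OF F_int] F_int by (simp add: integral_lborel_translate[OF F_int])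
  finally show ?thesis .
qed

section \<open>Stein's identity\<close>

lemma inner_matrix_vector_symmetric:
  fixes A :: "real^'n^'n"
  assumes "transpose A = A"
  shows "x \<bullet> (A *v y) = (A *v x) \<bullet> y"
  by (metis assms dot_lmul_matrix transpose_matrix_vector)

lemma has_real_derivative_quadratic_form_line:
  fixes P :: "real^'n^'n"
  assumes P: "transpose P = P"
  shows "((\<lambda>s. (x + s *\<^sub>R u) \<bullet> (P *v (x + s *\<^sub>R u)))
          has_real_derivative 2 * ((P *v u) \<bullet> (x + s *\<^sub>R u))) (at s)"
proof -
  have expand: "(x + s *\<^sub>R u) \<bullet> (P *v (x + s *\<^sub>R u))
      = x \<bullet> (P *v x) + 2 * s * ((P *v u) \<bullet> x) + s\<^sup>2 * (u \<bullet> (P *v u))" for s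
    using inner_matrix_vector_symmetric[OF P, of u x]
    by (simp add: matrix_vector_right_distrib matrix_vector_mult_scaleR inner_add_left
        inner_add_right inner_commute algebra_simps power2_eq_square)
  show ?thesis
    unfolding expand
    by (auto intro!: derivative_eq_intros simp: inner_add_right inner_commute algebra_simps)
qed

lemma has_real_derivative_gauss_pdf_line:
  assumes S: "pos_def_mat S"
  shows "((\<lambda>s. gauss_pdf S (x + s *\<^sub>R u)) has_real_derivative
          - ((matrix_inv S *v u) \<bullet> (x + s *\<^sub>R u)) * gauss_pdf S (x + s *\<^sub>R u)) (at s)"
proof -
  define c where "c = gauss_pdf S 0"
  have pdf: "gauss_pdf S y = c * exp (- (y \<bullet> (matrix_inv S *v y)) / 2)" for y
    unfolding c_def by (rule gauss_pdf_eq)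
  show ?thesis
    unfolding pdf using pos_def_mat_symmetric[OF pos_def_mat_inverse[OF S]]
    by (auto intro!: derivative_eq_intros has_real_derivative_quadratic_form_line)
qed

lemma stein_identity_lborel:
  fixes g g' :: "real \<Rightarrow> real" and S :: "real^'n^'n"
  assumes S: "pos_def_mat S"
    and g: "\<And>t. (g has_real_derivative g' t) (at t)" and g'_cont: "continuous_on UNIV g'"
    and g_bdd: "\<And>t. \<bar>g t\<bar> \<le> B" and g'_bdd: "\<And>t. \<bar>g' t\<bar> \<le> B"
  shows "(\<integral>x. gauss_pdf S x * (g (x \<bullet> \<beta>) * (x \<bullet> v)) \<partial>lborel)
       = ((S *v v) \<bullet> \<beta>) * (\<integral>x. gauss_pdf S x * g' (x \<bullet> \<beta>) \<partial>lborel)"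
proof -
  define u where "u = S *v v"
  have Pu: "matrix_inv S *v u = v"
    by (simp add: u_def matrix_vector_mul_assoc pos_def_mat_matrix_inv(2)[OF S])
  have g_cont: "continuous_on UNIV g"
    using g by (meson DERIV_isCont continuous_at_imp_continuous_on)
  have [measurable]: "g \<in> borel_measurable borel" "g' \<in> borel_measurable borel"
    using g_cont g'_cont by (simp_all add: borel_measurable_continuous_onI)
  define F where "F x = gauss_pdf S x * g (x \<bullet> \<beta>)" for x
  define G where "G x = (u \<bullet> \<beta>) * (gauss_pdf S x * g' (x \<bullet> \<beta>))
      - gauss_pdf S x * (g (x \<bullet> \<beta>) * (x \<bullet> v))" for x
  have int_g': "integrable lborel (\<lambda>x. gauss_pdf S x * g' (x \<bullet> \<beta>))"
    using g'_bdd by (intro integrable_gauss_pdf_bounded[OF S]) auto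
  have F_int: "integrable lborel F"
    unfolding F_def using g_bdd by (intro integrable_gauss_pdf_bounded[OF S]) auto
  have "\<bar>g (x \<bullet> \<beta>) * (x \<bullet> v)\<bar> \<le> B * norm v * (1 + norm x)" for x
  proof -
    have "\<bar>g (x \<bullet> \<beta>) * (x \<bullet> v)\<bar> \<le> B * (norm x * norm v)"
      unfolding abs_mult using g_bdd Cauchy_Schwarz_ineq2[of x v] order_trans[OF abs_ge_zero g_bdd]
      by (intro mult_mono) auto
    also have "\<dots> \<le> B * norm v * (1 + norm x)"
      using order_trans[OF abs_ge_zero g_bdd] by (simp add: algebra_simps)
    finally show ?thesis .
  qed
  then have int_g_x: "integrable lborel (\<lambda>x. gauss_pdf S x * (g (x \<bullet> \<beta>) * (x \<bullet> v)))"
    using integrable_gauss_pdf_linear_growth[OF S, of "\<lambda>x. g (x \<bullet> \<beta>) * (x \<bullet> v)"]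
    by (simp del: mult_1_left) blast
  have G_int: "integrable lborel G"
    unfolding G_def using int_g' int_g_x by simp
  have G_cont: "continuous_on UNIV G"
    unfolding G_def
    by (intro continuous_intros continuous_on_compose2[OF g'_cont]
          continuous_on_compose2[OF g_cont] continuous_on_compose2[OF continuous_on_gauss_pdf]) auto
  have F_deriv: "((\<lambda>s. F (x + s *\<^sub>R u)) has_real_derivative G (x + s *\<^sub>R u)) (at s)" for x s
  proof -
    have "((\<lambda>s. (x + s *\<^sub>R u) \<bullet> \<beta>) has_real_derivative u \<bullet> \<beta>) (at s)"
      by (auto intro!: derivative_eq_intros simp: inner_add_left)
    from DERIV_mult[OF has_real_derivative_gauss_pdf_line[OF S, of x u] DERIV_chain2[OF g this]]
    show ?thesis
      unfolding F_def G_def Pu by (simp add: algebra_simps inner_commute)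
  qed
  have "0 = integral\<^sup>L lborel G"
    using lborel_integral_directional_derivative_eq_0[OF F_int G_int G_cont F_deriv] by simp
  also have "\<dots> = (u \<bullet> \<beta>) * (\<integral>x. gauss_pdf S x * g' (x \<bullet> \<beta>) \<partial>lborel)
      - (\<integral>x. gauss_pdf S x * (g (x \<bullet> \<beta>) * (x \<bullet> v)) \<partial>lborel)"
    unfolding G_def using int_g' int_g_x by simp
  finally show ?thesis unfolding u_def by simp
qed

lemma gaussian_vec_stein_identity:
  fixes g g' :: "real \<Rightarrow> real" and S :: "real^'n^'n"
  assumes S: "pos_def_mat S"
    and g: "\<And>t. (g has_real_derivative g' t) (at t)" and g'_cont: "continuous_on UNIV g'"
    and g_bdd: "\<And>t. \<bar>g t\<bar> \<le> B" and g'_bdd: "\<And>t. \<bar>g' t\<bar> \<le> B"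
  shows "(\<integral>x. g (x \<bullet> \<beta>) *\<^sub>R x \<partial>gaussian_vec S) = (\<integral>x. g' (x \<bullet> \<beta>) \<partial>gaussian_vec S) *\<^sub>R (S *v \<beta>)"
proof (rule euclidean_eqI)
  fix v :: "real^'n"
  have [measurable]: "g \<in> borel_measurable borel" "g' \<in> borel_measurable borel"
    using g g'_cont
    by (auto intro!: borel_measurable_continuous_onI continuous_at_imp_continuous_on DERIV_isCont)
  have "norm (g (x \<bullet> \<beta>) *\<^sub>R x) \<le> B * (1 + norm x)" for x :: "real^'n"
  proof -
    have "norm (g (x \<bullet> \<beta>) *\<^sub>R x) \<le> B * norm x"
      using mult_right_mono[OF g_bdd norm_ge_zero] by simp
    also have "\<dots> \<le> B * (1 + norm x)"
      using g_bdd[of 0] by (simp add: mult_left_mono)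
    finally show ?thesis .
  qed
  then have int: "integrable (gaussian_vec S) (\<lambda>x. g (x \<bullet> \<beta>) *\<^sub>R x)"
    by (intro integrable_gaussian_vec_linear_growth[OF S]) auto
  have "(\<integral>x. g (x \<bullet> \<beta>) *\<^sub>R x \<partial>gaussian_vec S) \<bullet> v
      = (\<integral>x. g (x \<bullet> \<beta>) * (x \<bullet> v) \<partial>gaussian_vec S)"
    using integral_inner_left[OF int, of v] by simp
  also have "\<dots> = (\<integral>x. gauss_pdf S x * (g (x \<bullet> \<beta>) * (x \<bullet> v)) \<partial>lborel)"
    using S by (simp add: integral_gaussian_vec)
  also have "\<dots> = ((S *v v) \<bullet> \<beta>) * (\<integral>x. gauss_pdf S x * g' (x \<bullet> \<beta>) \<partial>lborel)"
    by (rule stein_identity_lborel[OF S g g'_cont g_bdd g'_bdd])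
  also have "\<dots> = ((\<integral>x. g' (x \<bullet> \<beta>) \<partial>gaussian_vec S) *\<^sub>R (S *v \<beta>)) \<bullet> v"
    using S inner_matrix_vector_symmetric[OF pos_def_mat_symmetric[OF S], of \<beta> v]
    by (simp add: integral_gaussian_vec inner_commute)
  finally show "(\<integral>x. g (x \<bullet> \<beta>) *\<^sub>R x \<partial>gaussian_vec S) \<bullet> v
      = ((\<integral>x. g' (x \<bullet> \<beta>) \<partial>gaussian_vec S) *\<^sub>R (S *v \<beta>)) \<bullet> v" .
qed

lemma gaussian_vec_stein_identity_sigmoid:
  assumes "pos_def_mat S"
  shows "(\<integral>x. sigmoid (x \<bullet> \<beta>) *\<^sub>R x \<partial>gaussian_vec S)
       = (\<integral>x. deriv sigmoid (x \<bullet> \<beta>) \<partial>gaussian_vec S) *\<^sub>R (S *v \<beta>)"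
proof (rule gaussian_vec_stein_identity[OF assms, where B=1])
  show "(sigmoid has_real_derivative deriv sigmoid t) (at t)" for t
    using has_real_derivative_sigmoid by (simp add: deriv_sigmoid)
  show "\<bar>sigmoid t\<bar> \<le> 1" "\<bar>deriv sigmoid t\<bar> \<le> 1" for t
    using sigmoid_pos sigmoid_less_1 deriv_sigmoid_pos deriv_sigmoid_le_1
    by (simp_all add: less_imp_le)
qed (rule continuous_on_deriv_sigmoid)

lemma
  fixes S :: "real^'n^'n"
  assumes S: "pos_def_mat S"
  shows integral_gaussian_vec_deriv_sigmoid_pos: "0 < (\<integral>x. deriv sigmoid (x \<bullet> \<beta>) \<partial>gaussian_vec S)"
    and integral_gaussian_vec_deriv_sigmoid_le:
      "(\<integral>x. deriv sigmoid (x \<bullet> \<beta>) \<partial>gaussian_vec S) \<le> measure (gaussian_vec S) UNIV"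
proof -
  interpret finite_measure "gaussian_vec S"
    by (rule finite_measure_gaussian_vec[OF S])
  have int: "integrable (gaussian_vec S) (\<lambda>x. deriv sigmoid (x \<bullet> \<beta>))"
    using deriv_sigmoid_pos deriv_sigmoid_le_1
    by (intro integrable_const_bound[where B=1]) (auto simp: less_imp_le)
  show "0 < (\<integral>x. deriv sigmoid (x \<bullet> \<beta>) \<partial>gaussian_vec S)"
    using int deriv_sigmoid_pos by (rule integral_gaussian_vec_pos[OF S])
  have "(\<integral>x. deriv sigmoid (x \<bullet> \<beta>) \<partial>gaussian_vec S) \<le> (\<integral>x. 1 \<partial>gaussian_vec S)"
    using int deriv_sigmoid_le_1 by (intro integral_mono) auto
  then show "(\<integral>x. deriv sigmoid (x \<bullet> \<beta>) \<partial>gaussian_vec S) \<le> measure (gaussian_vec S) UNIV"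
    by (simp add: gaussian_vec_def)
qed

section \<open>Exchanging the two expectations\<close>

lemma integrable_scaleR_bounded:
  fixes f :: "'a \<Rightarrow> 'b::{banach, second_countable_topology}"
  assumes f: "integrable M f" and g: "g \<in> borel_measurable M" and g_bdd: "\<And>x. \<bar>g x\<bar> \<le> B"
  shows "integrable M (\<lambda>x. g x *\<^sub>R f x)"
proof (rule Bochner_Integration.integrable_bound)
  show "integrable M (\<lambda>x. B * norm (f x))"
    using f by simp
  show "AE x in M. norm (g x *\<^sub>R f x) \<le> norm (B * norm (f x))"
    using mult_right_mono[OF g_bdd norm_ge_zero] order_trans[OF abs_ge_zero g_bdd]
    by (intro AE_I2) (simp add: abs_mult)
qed (use f g in measurable)

lemma integral_scaleR_integral_swap:
  fixes h :: "'a \<Rightarrow> 'b \<Rightarrow> real" and f :: "'b \<Rightarrow> 'c::{banach, second_countable_topology}"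
  assumes "finite_measure M" "finite_measure N"
    and h: "case_prod h \<in> borel_measurable (M \<Otimes>\<^sub>M N)" and h_bdd: "\<And>y x. \<bar>h y x\<bar> \<le> B"
    and f: "integrable N f"
  shows "(\<integral>x. (\<integral>y. h y x \<partial>M) *\<^sub>R f x \<partial>N) = (\<integral>y. (\<integral>x. h y x *\<^sub>R f x \<partial>N) \<partial>M)"
proof -
  interpret M: finite_measure M by fact
  interpret N: finite_measure N by fact
  interpret pair_sigma_finite M N ..
  have B: "0 \<le> B"
    using h_bdd by (meson abs_ge_zero order_trans)
  have [measurable]: "f \<in> borel_measurable N"
    using f by (rule borel_measurable_integrable)
  have h_y [measurable]: "h y \<in> borel_measurable N" if "y \<in> space M" for y
    using measurable_comp[OF measurable_Pair1'[OF that] h] by (simp add: comp_def)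
  have h_x: "(\<lambda>y. h y x) \<in> borel_measurable M" if "x \<in> space N" for x
    using measurable_comp[OF measurable_Pair2'[OF that] h] by (simp add: comp_def)
  have hf_bound: "norm (h y x *\<^sub>R f x) \<le> B * norm (f x)" for y x
    using mult_right_mono[OF h_bdd norm_ge_zero] by simp
  have hf_int: "integrable N (\<lambda>x. h y x *\<^sub>R f x)" if "y \<in> space M" for y
    using f h_y[OF that] h_bdd by (rule integrable_scaleR_bounded)
  have norm_integral_le: "(\<integral>x. norm (h y x *\<^sub>R f x) \<partial>N) \<le> B * (\<integral>x. norm (f x) \<partial>N)"
    if "y \<in> space M" for y
  proof -
    have "(\<integral>x. norm (h y x *\<^sub>R f x) \<partial>N) \<le> (\<integral>x. B * norm (f x) \<partial>N)"
      using integrable_norm[OF hf_int[OF that]] f hf_bound by (intro integral_mono) auto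
    then show ?thesis by simp
  qed
  have "integrable (M \<Otimes>\<^sub>M N) (\<lambda>(y, x). h y x *\<^sub>R f x)"
  proof (rule Fubini_integrable)
    show "(\<lambda>(y, x). h y x *\<^sub>R f x) \<in> borel_measurable (M \<Otimes>\<^sub>M N)"
      using h by measurable
    show "integrable M (\<lambda>y. \<integral>x. norm (case_prod (\<lambda>y x. h y x *\<^sub>R f x) (y, x)) \<partial>N)"
    proof (rule M.integrable_const_bound[where B="B * \<integral>x. norm (f x) \<partial>N"])
      show "AE y in M. norm (\<integral>x. norm (case_prod (\<lambda>y x. h y x *\<^sub>R f x) (y, x)) \<partial>N)
          \<le> B * \<integral>x. norm (f x) \<partial>N"
        using norm_integral_le by (intro AE_I2) simp
    qed (use h in measurable)
    show "AE y in M. integrable N (\<lambda>x. case_prod (\<lambda>y x. h y x *\<^sub>R f x) (y, x))"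
      using hf_int by (intro AE_I2) simp
  qed
  then have Fubini: "(\<integral>x. (\<integral>y. h y x *\<^sub>R f x \<partial>M) \<partial>N) = (\<integral>y. (\<integral>x. h y x *\<^sub>R f x \<partial>N) \<partial>M)"
    by (rule Fubini_integral[where f="\<lambda>y x. h y x *\<^sub>R f x", simplified])
  have inner: "(\<integral>y. h y x *\<^sub>R f x \<partial>M) = (\<integral>y. h y x \<partial>M) *\<^sub>R f x" if "x \<in> space N" for x
  proof (rule integral_scaleR_left)
    show "integrable M (\<lambda>y. h y x)"
      using h_x[OF that] h_bdd by (intro M.integrable_const_bound[where B=B]) auto
  qed
  have "(\<integral>x. (\<integral>y. h y x \<partial>M) *\<^sub>R f x \<partial>N) = (\<integral>x. (\<integral>y. h y x *\<^sub>R f x \<partial>M) \<partial>N)"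
    by (rule Bochner_Integration.integral_cong) (simp_all add: inner)
  with Fubini show ?thesis by simp
qed

theorem proposition1:
  fixes \<Sigma> :: "real ^'n ^'n"
    and M\<^sub>\<beta> :: "(real ^'n) measure"
    and b :: "real ^'n"
  assumes pd: "pos_def_mat \<Sigma>"
    and prob: "prob_space M\<^sub>\<beta>"
    and sets_M: "sets M\<^sub>\<beta> = sets borel"
    and int_beta: "integrable M\<^sub>\<beta> (\<lambda>\<beta>. norm \<beta>)"
    and moment: "(\<integral>x. sigmoid (x \<bullet> b) *\<^sub>R x \<partial>gaussian_vec \<Sigma>)
               = (\<integral>x. (\<integral>\<beta>. sigmoid (x \<bullet> \<beta>) \<partial>M\<^sub>\<beta>) *\<^sub>R x \<partial>gaussian_vec \<Sigma>)"
  shows "(let c = 1 / (\<integral>x. deriv sigmoid (x \<bullet> b) \<partial>gaussian_vec \<Sigma>)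
          in c > 0 \<and>
             b = c *\<^sub>R (\<integral>\<beta>. (\<integral>x. deriv sigmoid (x \<bullet> \<beta>) \<partial>gaussian_vec \<Sigma>) *\<^sub>R \<beta> \<partial>M\<^sub>\<beta>))"
proof -
  interpret M: prob_space M\<^sub>\<beta> by (rule prob)
  interpret G: finite_measure "gaussian_vec \<Sigma>" by (rule finite_measure_gaussian_vec[OF pd])
  note sets_M [measurable_cong]
  define w where "w \<beta> = (\<integral>x. deriv sigmoid (x \<bullet> \<beta>) \<partial>gaussian_vec \<Sigma>)" for \<beta>
  define m where "m = (\<integral>\<beta>. w \<beta> *\<^sub>R \<beta> \<partial>M\<^sub>\<beta>)"
  have w_pos: "0 < w \<beta>" for \<beta>
    unfolding w_def by (rule integral_gaussian_vec_deriv_sigmoid_pos[OF pd])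
  have m_int: "integrable M\<^sub>\<beta> (\<lambda>\<beta>. w \<beta> *\<^sub>R \<beta>)"
    using int_beta w_pos integral_gaussian_vec_deriv_sigmoid_le[OF pd]
    by (intro integrable_scaleR_bounded[where B="measure (gaussian_vec \<Sigma>) UNIV"])
      (auto simp: integrable_norm_iff w_def less_imp_le)
  have "\<Sigma> *v (w b *\<^sub>R b) = (\<integral>x. (\<integral>\<beta>. sigmoid (x \<bullet> \<beta>) \<partial>M\<^sub>\<beta>) *\<^sub>R x \<partial>gaussian_vec \<Sigma>)"
    using moment gaussian_vec_stein_identity_sigmoid[OF pd]
    by (simp add: w_def matrix_vector_mult_scaleR)
  also have "\<dots> = (\<integral>\<beta>. (\<integral>x. sigmoid (x \<bullet> \<beta>) *\<^sub>R x \<partial>gaussian_vec \<Sigma>) \<partial>M\<^sub>\<beta>)"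
    using sigmoid_pos sigmoid_less_1
    by (intro integral_scaleR_integral_swap[where B=1] M.finite_measure_axioms
        G.finite_measure_axioms integrable_gaussian_vec_linear_growth[OF pd, where C=1])
      (auto simp: less_imp_le)
  also have "\<dots> = (\<integral>\<beta>. \<Sigma> *v (w \<beta> *\<^sub>R \<beta>) \<partial>M\<^sub>\<beta>)"
    by (simp add: gaussian_vec_stein_identity_sigmoid[OF pd] w_def matrix_vector_mult_scaleR)
  also have "\<dots> = \<Sigma> *v m"
    unfolding m_def by (rule integral_bounded_linear[OF matrix_vector_mul_bounded_linear m_int])
  finally have "w b *\<^sub>R b = m"
    using pos_def_mat_kernel[OF pd, of "w b *\<^sub>R b - m"] by (simp add: matrix_vector_mult_diff_distrib)
  then show ?thesis
    using w_pos[of b] unfolding Let_def w_def[symmetric] m_def[symmetric] by auto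
qed

end
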